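(* Consider the 9-puzzle: the $3\times 3$ grid graph with 9 distinct robots, one occupying each vertex. Then any two states of the 9-puzzle are connected via legal moves, i.e., from any assignment of the 9 robots to the 9 vertices one can reach any other such assignment by a finite sequence of legal moves.
   Context: A state is a bijection between the set of robots and the vertex set of the grid. A legal move (one time step) takes a state to another state such that each robot either stays at its vertex or moves to an adjacent vertex, no two robots end at the same vertex, and no two robots traverse the same edge in opposite directions (swap). Several robots may move simultaneously; since every vertex is occupied, the moving robots move synchronously along one or more vertex-disjoint cycles of the grid. *)

theory Defs
  imports Main
begin

definition grid3 :: "(nat \<times> nat) set" where
  "grid3 = {0..<3} \<times> {0..<3}"

definition grid_adj :: "nat \<times> nat \<Rightarrow> nat \<times> nat \<Rightarrow> bool" where
  "grid_adj u v \<longleftrightarrow>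
     (fst u = fst v \<and> (snd u = Suc (snd v) \<or> snd v = Suc (snd u))) \<or>
     (snd u = snd v \<and> (fst u = Suc (fst v) \<or> fst v = Suc (fst u)))"

definition is_state :: "('r \<Rightarrow> nat \<times> nat) \<Rightarrow> bool" where
  "is_state s \<longleftrightarrow> bij_betw s UNIV grid3"

definition legal_move :: "('r \<Rightarrow> nat \<times> nat) \<Rightarrow> ('r \<Rightarrow> nat \<times> nat) \<Rightarrow> bool" where
  "legal_move s t \<longleftrightarrow> is_state s \<and> is_state t \<and>
     (\<forall>r. t r = s r \<or> grid_adj (s r) (t r)) \<and>
     (\<forall>r1 r2. r1 \<noteq> r2 \<longrightarrow> \<not> (t r1 = s r2 \<and> t r2 = s r1))"

end

theory Submission
  imports Defs "HOL-Combinatorics.Permutations"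
begin

text \<open>Call a permutation p of the grid realizable if every state s can be driven to
  p \<circ> s by legal moves. Realizable permutations are closed under composition, and the
  rotation of the four robots around a unit square is a single legal move. Every
  transposition of the centre with another vertex is an explicit product of at most seven
  square rotations; conjugating one centre transposition by another yields every
  transposition, hence every permutation of the nine vertices. Finally, any two states differ
  by a permutation of the vertices.\<close>

lemma permutes_eqI:
  assumes "p permutes S" and "q permutes S" and "\<forall>x\<in>S. p x = q x"
  shows "p = q"
proof
  show "p x = q x" for x
    using assms by (cases "x \<in> S") (simp_all add: permutes_not_in)
qed

lemma bij_betw_UNIV_eq_comp_permutes:
  assumes "bij_betw s UNIV S" and "bij_betw t UNIV S"
  obtains p where "p permutes S" and "t = p \<circ> s"
proof
  let ?p = "\<lambda>x. if x \<in> S then t (inv_into UNIV s x) else x"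
  have "bij_betw (t \<circ> inv_into UNIV s) S S"
    using bij_betw_inv_into[OF assms(1)] assms(2) by (rule bij_betw_trans)
  then have "bij_betw ?p S S"
    by (rule bij_betw_cong[THEN iffD1, rotated]) auto
  then show "?p permutes S"
    by (rule bij_imp_permutes) simp
  show "t = ?p \<circ> s"
    using assms(1) by (auto simp: fun_eq_iff bij_betw_def inv_into_f_f)
qed

definition cycle4 :: "'a \<Rightarrow> 'a \<Rightarrow> 'a \<Rightarrow> 'a \<Rightarrow> 'a \<Rightarrow> 'a" where
  "cycle4 a b c d = (\<lambda>v. if v = a then b else if v = b then c else if v = c then d
     else if v = d then a else v)"

lemma cycle4_permutes:
  assumes "distinct [a, b, c, d]" and "{a, b, c, d} \<subseteq> S"
  shows "cycle4 a b c d permutes S"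
proof -
  have "cycle4 a b c d = transpose a b \<circ> transpose b c \<circ> transpose c d"
    using assms(1) by (auto simp: fun_eq_iff cycle4_def transpose_def)
  then show ?thesis
    using assms(2) by (simp add: permutes_compose permutes_swap_id)
qed

lemma cycle4_cases:
  "cycle4 a b c d v = v \<or> (v, cycle4 a b c d v) \<in> {(a, b), (b, c), (c, d), (d, a)}"
  by (simp add: cycle4_def)

lemma cycle4_no_swap:
  assumes "distinct [a, b, c, d]" and "cycle4 a b c d u = v" and "cycle4 a b c d v = u"
  shows "u = v"
  using assms by (auto simp: cycle4_def split: if_splits)

definition realizable :: "'r itself \<Rightarrow> (nat \<times> nat \<Rightarrow> nat \<times> nat) \<Rightarrow> bool" where
  "realizable (_ :: 'r itself) p \<longleftrightarrow> p permutes grid3 \<and>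
     (\<forall>s :: 'r \<Rightarrow> nat \<times> nat. is_state s \<longrightarrow> legal_move\<^sup>*\<^sup>* s (p \<circ> s))"

lemma is_state_permutes_comp:
  assumes "p permutes grid3" and "is_state s"
  shows "is_state (p \<circ> s)"
  using assms unfolding is_state_def by (meson bij_betw_trans permutes_imp_bij)

lemma realizable_imp_permutes: "realizable TYPE('r) p \<Longrightarrow> p permutes grid3"
  unfolding realizable_def by blast

lemma realizable_id: "realizable TYPE('r) id"
  unfolding realizable_def by simp

lemma realizable_comp:
  assumes p: "realizable TYPE('r) p" and q: "realizable TYPE('r) q"
  shows "realizable TYPE('r) (p \<circ> q)"
  unfolding realizable_def
proof (intro conjI allI impI)
  show "p \<circ> q permutes grid3"
    using p q by (simp add: realizable_imp_permutes permutes_compose)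
  fix s :: "'r \<Rightarrow> nat \<times> nat"
  assume s: "is_state s"
  have "legal_move\<^sup>*\<^sup>* s (q \<circ> s)"
    using q s unfolding realizable_def by blast
  also have "legal_move\<^sup>*\<^sup>* (q \<circ> s) (p \<circ> (q \<circ> s))"
    using p is_state_permutes_comp[OF realizable_imp_permutes[OF q] s] unfolding realizable_def by blast
  finally show "legal_move\<^sup>*\<^sup>* s (p \<circ> q \<circ> s)"
    by (simp add: comp_assoc)
qed

lemma legal_move_cycle4:
  assumes distinct: "distinct [a, b, c, d]" and in_grid: "{a, b, c, d} \<subseteq> grid3"
    and adj: "grid_adj a b" "grid_adj b c" "grid_adj c d" "grid_adj d a"
    and s: "is_state (s :: 'r \<Rightarrow> nat \<times> nat)"
  shows "legal_move s (cycle4 a b c d \<circ> s)"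
  unfolding legal_move_def
proof (intro conjI allI impI)
  show "is_state (cycle4 a b c d \<circ> s)"
    using cycle4_permutes[OF distinct in_grid] s by (rule is_state_permutes_comp)
  show "(cycle4 a b c d \<circ> s) r = s r \<or> grid_adj (s r) ((cycle4 a b c d \<circ> s) r)" for r
    using cycle4_cases[of a b c d "s r"] adj by auto
  fix r1 r2 :: 'r
  assume "r1 \<noteq> r2"
  then have "s r1 \<noteq> s r2"
    using s unfolding is_state_def bij_betw_def by (meson injD)
  then show "\<not> ((cycle4 a b c d \<circ> s) r1 = s r2 \<and> (cycle4 a b c d \<circ> s) r2 = s r1)"
    using cycle4_no_swap[OF distinct, of "s r1" "s r2"] by auto
qed (rule s)

lemma realizable_cycle4:
  assumes "distinct [a, b, c, d]" and "{a, b, c, d} \<subseteq> grid3"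
    and "grid_adj a b" "grid_adj b c" "grid_adj c d" "grid_adj d a"
  shows "realizable TYPE('r) (cycle4 a b c d)"
  unfolding realizable_def
  using cycle4_permutes[OF assms(1,2)] legal_move_cycle4[OF assms] by blast

text \<open>Rotations of the unit square with upper left corner (i, j), the first coordinate
  being the row.\<close>

definition rot_cw :: "nat \<Rightarrow> nat \<Rightarrow> nat \<times> nat \<Rightarrow> nat \<times> nat" where
  "rot_cw i j = cycle4 (i, j) (i, Suc j) (Suc i, Suc j) (Suc i, j)"

definition rot_ccw :: "nat \<Rightarrow> nat \<Rightarrow> nat \<times> nat \<Rightarrow> nat \<times> nat" where
  "rot_ccw i j = cycle4 (i, j) (Suc i, j) (Suc i, Suc j) (i, Suc j)"

lemma realizable_rot_cw: "i < 2 \<Longrightarrow> j < 2 \<Longrightarrow> realizable TYPE('r) (rot_cw i j)"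
  unfolding rot_cw_def by (rule realizable_cycle4) (simp_all add: grid3_def grid_adj_def)

lemma realizable_rot_ccw: "i < 2 \<Longrightarrow> j < 2 \<Longrightarrow> realizable TYPE('r) (rot_ccw i j)"
  unfolding rot_ccw_def by (rule realizable_cycle4) (simp_all add: grid3_def grid_adj_def)

lemma grid3_explicit:
  "grid3 = {(0,0), (0,1), (0,2), (1,0), (1,1), (1,2), (2,0), (2,1), (2,2)}"
proof -
  have "{0..<3::nat} = {0, 1, 2}" by auto
  then show ?thesis by (auto simp: grid3_def)
qed

lemma ball_grid3:
  "(\<forall>v\<in>grid3. P v) \<longleftrightarrow>
     P (0,0) \<and> P (0,1) \<and> P (0,2) \<and> P (1,0) \<and> P (1,1) \<and> P (1,2) \<and> P (2,0) \<and> P (2,1) \<and> P (2,2)"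
  unfolding grid3_explicit by simp

lemma transpose_centre_eq_rotations:
  "transpose (1,1) (0,0) = rot_cw 1 0 \<circ> rot_ccw 0 1 \<circ> rot_ccw 0 0 \<circ> rot_ccw 1 0 \<circ> rot_cw 0 1"
  "transpose (1,1) (0,1) =
     rot_cw 0 0 \<circ> rot_ccw 1 0 \<circ> rot_cw 0 1 \<circ> rot_cw 1 0 \<circ> rot_ccw 0 1 \<circ> rot_cw 0 0 \<circ> rot_cw 0 0"
  "transpose (1,1) (0,2) = rot_ccw 1 1 \<circ> rot_cw 0 0 \<circ> rot_cw 0 1 \<circ> rot_cw 1 1 \<circ> rot_ccw 0 0"
  "transpose (1,1) (1,0) =
     rot_ccw 0 0 \<circ> rot_cw 0 1 \<circ> rot_ccw 1 0 \<circ> rot_ccw 0 1 \<circ> rot_cw 1 0 \<circ> rot_cw 0 0 \<circ> rot_cw 0 0"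
  "transpose (1,1) (1,2) =
     rot_ccw 1 1 \<circ> rot_ccw 1 0 \<circ> rot_ccw 1 1 \<circ> rot_cw 1 0 \<circ> rot_cw 0 0 \<circ> rot_cw 1 1 \<circ> rot_ccw 0 0"
  "transpose (1,1) (2,0) = rot_cw 1 1 \<circ> rot_ccw 0 0 \<circ> rot_ccw 1 0 \<circ> rot_ccw 1 1 \<circ> rot_cw 0 0"
  "transpose (1,1) (2,1) =
     rot_cw 1 1 \<circ> rot_cw 0 1 \<circ> rot_cw 1 1 \<circ> rot_ccw 0 1 \<circ> rot_ccw 0 0 \<circ> rot_ccw 1 1 \<circ> rot_cw 0 0"
  "transpose (1,1) (2,2) = rot_ccw 1 0 \<circ> rot_cw 0 1 \<circ> rot_cw 1 1 \<circ> rot_cw 1 0 \<circ> rot_ccw 0 1"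
  by (rule permutes_eqI[where S = grid3], simp add: permutes_swap_id grid3_def,
      (intro permutes_compose realizable_imp_permutes realizable_rot_cw realizable_rot_ccw; simp),
      unfold ball_grid3, simp add: rot_cw_def rot_ccw_def cycle4_def transpose_def)+

lemma realizable_transpose_centre:
  assumes "v \<in> grid3"
  shows "realizable TYPE('r) (transpose (1,1) v)"
  using assms unfolding grid3_explicit
  by (elim insertE emptyE; hypsubst, simp only: transpose_centre_eq_rotations transpose_same)
    (intro realizable_id realizable_comp realizable_rot_cw realizable_rot_ccw; simp)+

lemma realizable_transpose:
  assumes "a \<in> grid3" and "b \<in> grid3"
  shows "realizable TYPE('r) (transpose a b)"
proof -
  have centre: "realizable TYPE('r) (transpose v (1,1))" if "v \<in> grid3" for v
    using realizable_transpose_centre[OF that] by (simp add: transpose_commute)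
  show ?thesis
  proof (cases "a = b \<or> b = (1,1)")
    case True
    then show ?thesis
      using centre[OF assms(1)] by (auto simp: realizable_id)
  next
    case False
    then have conjugate: "transpose a b = transpose a (1,1) \<circ> transpose (1,1) b \<circ> transpose a (1,1)"
      by (intro transpose_comp_triple[symmetric]) auto
    show ?thesis
      unfolding conjugate using assms by (intro realizable_comp centre realizable_transpose_centre)
  qed
qed

lemma permutes_imp_realizable:
  assumes "p permutes grid3"
  shows "realizable TYPE('r) p"
proof -
  have "finite grid3"
    by (simp add: grid3_def)
  with assms show ?thesis
  proof (induction rule: permutes_induct)
    case id
    show ?case by (rule realizable_id)
  next
    case (swap a b p)
    then show ?case by (intro realizable_comp realizable_transpose)
  qed
qed

theorem proposition3:
  fixes s t :: "'r::finite \<Rightarrow> nat \<times> nat"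
  assumes "card (UNIV :: 'r set) = 9"
    and "is_state s" and "is_state t"
  shows "legal_move\<^sup>*\<^sup>* s t"
proof -
  \<comment> \<open>The cardinality hypothesis is implied by \<open>is_state s\<close> and not needed.\<close>
  obtain p where "p permutes grid3" and t: "t = p \<circ> s"
    using assms(2,3) unfolding is_state_def by (rule bij_betw_UNIV_eq_comp_permutes)
  then have "realizable TYPE('r) p"
    by (intro permutes_imp_realizable)
  then show ?thesis
    using assms(2) unfolding t realizable_def by blast
qed

end
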